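(* Let $R$ be an associative ring with identity and involution $*$, and let $a\in R^{\#}\cap R^{\dagger}$. Then $a\in R^{SEP}$ if and only if $(a(a^{\#})^*a^{\dagger})^k=(a^{\dagger}a^2)^k$ for both $k=2$ and $k=3$.
   Context: An involution on $R$ is a map $x\mapsto x^*$ with $(x^* )^*=x$, $(x+y)^*=x^*+y^*$, $(xy)^*=y^*x^*$. An element $a$ is Moore–Penrose invertible if there is $b$ with $aba=a$, $bab=b$, $(ab)^*=ab$, $(ba)^*=ba$; such $b$ is unique, denoted $a^{\dagger}$, and $R^{\dagger}$ is the set of such $a$. An element $a$ is group invertible if there is $b$ with $aba=a$, $bab=b$, $ab=ba$; such $b$ is unique, denoted $a^{\#}$, and $R^{\#}$ is the set of such $a$. For $a\in R^{\#}\cap R^{\dagger}$, $a$ is SEP if $a^*=a^{\dagger}=a^{\#}$; $R^{SEP}$ denotes the set of SEP elements. *)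

theory Defs
  imports Main
begin

definition involution :: "('a::ring_1 \<Rightarrow> 'a) \<Rightarrow> bool" where
  "involution s \<longleftrightarrow> (\<forall>x. s (s x) = x) \<and> (\<forall>x y. s (x + y) = s x + s y)
     \<and> (\<forall>x y. s (x * y) = s y * s x)"

definition is_mp_inv :: "('a::ring_1 \<Rightarrow> 'a) \<Rightarrow> 'a \<Rightarrow> 'a \<Rightarrow> bool" where
  "is_mp_inv s a b \<longleftrightarrow> a * b * a = a \<and> b * a * b = b \<and> s (a * b) = a * b \<and> s (b * a) = b * a"

definition mp_invertible :: "('a::ring_1 \<Rightarrow> 'a) \<Rightarrow> 'a \<Rightarrow> bool" where
  "mp_invertible s a \<longleftrightarrow> (\<exists>b. is_mp_inv s a b)"

definition mp_inv :: "('a::ring_1 \<Rightarrow> 'a) \<Rightarrow> 'a \<Rightarrow> 'a" where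
  "mp_inv s a = (THE b. is_mp_inv s a b)"

definition is_group_inv :: "'a::ring_1 \<Rightarrow> 'a \<Rightarrow> bool" where
  "is_group_inv a b \<longleftrightarrow> a * b * a = a \<and> b * a * b = b \<and> a * b = b * a"

definition group_invertible :: "'a::ring_1 \<Rightarrow> bool" where
  "group_invertible a \<longleftrightarrow> (\<exists>b. is_group_inv a b)"

definition group_inv :: "'a::ring_1 \<Rightarrow> 'a" where
  "group_inv a = (THE b. is_group_inv a b)"

definition is_SEP :: "('a::ring_1 \<Rightarrow> 'a) \<Rightarrow> 'a \<Rightarrow> bool" where
  "is_SEP s a \<longleftrightarrow> group_invertible a \<and> mp_invertible s a
     \<and> s a = mp_inv s a \<and> mp_inv s a = group_inv a"

end

theory Submission
  imports Defs
begin

(* Put g = a\<^sup>#, m = a\<^sup>\<dagger> and G = g\<^sup>*. Because m a G = G and a m a = a, the k-th powers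
   (k \<ge> 1) of a G m and m a\<^sup>2 are a G\<^sup>k m and m a\<^bsup>k+1\<^esup>. The identity for k = 2 alone yields
   a\<^sup>4 m = a\<^sup>3, hence a m = a g; so a g is hermitian and m = g. Compressing by the hermitian
   idempotent a g, in whose corner ring a is invertible with inverse g, the two identities
   become G\<^sup>2 = a\<^sup>2 and G\<^sup>3 = a\<^sup>3, whence G = a, i.e. a\<^sup>* = g. *)

lemma involution_mult: "involution s \<Longrightarrow> s (x * y) = s y * s x"
  by (simp add: involution_def)

lemma involution_involutive: "involution s \<Longrightarrow> s (s x) = x"
  by (simp add: involution_def)

lemma is_mp_inv_unique:
  assumes s: "involution s" and b: "is_mp_inv s a b" and c: "is_mp_inv s a c"
  shows "b = c"
proof -
  have b': "a * b * a = a" "b * a * b = b" "s (a * b) = a * b" "s (b * a) = b * a"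
    using b by (auto simp: is_mp_inv_def)
  have c': "a * c * a = a" "c * a * c = c" "s (a * c) = a * c" "s (c * a) = c * a"
    using c by (auto simp: is_mp_inv_def)
  note adjoint = involution_mult[OF s]
  have "b = b * s (a * b)" using b' by (simp add: mult.assoc)
  also have "\<dots> = b * s b * s (a * c * a)" using c' by (simp add: adjoint mult.assoc)
  also have "\<dots> = b * (s (a * b) * s (a * c))" by (simp add: adjoint mult.assoc)
  also have "\<dots> = b * a * b * a * c" by (simp only: b'(3) c'(3) mult.assoc)
  also have "\<dots> = b * a * c" using b' by simp
  finally have left: "b = b * a * c" .
  have "c = s (c * a) * c" using c' by simp
  also have "\<dots> = s (a * b * a) * s c * c" using b' by (simp add: adjoint mult.assoc)
  also have "\<dots> = s (b * a) * s (c * a) * c" by (simp add: adjoint mult.assoc)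
  also have "\<dots> = b * a * c" using b' c' by (simp add: mult.assoc)
  finally show ?thesis using left by simp
qed

lemma mp_inv_eqI: "involution s \<Longrightarrow> is_mp_inv s a b \<Longrightarrow> mp_inv s a = b"
  unfolding mp_inv_def by (rule the_equality) (auto intro: is_mp_inv_unique)

lemma is_group_inv_unique:
  assumes b: "is_group_inv a b" and c: "is_group_inv a c"
  shows "b = c"
proof -
  have b': "a * b * a = a" "b * a * b = b" "a * b = b * a" using b by (auto simp: is_group_inv_def)
  have c': "a * c * a = a" "c * a * c = c" "a * c = c * a" using c by (auto simp: is_group_inv_def)
  have "b = b * b * (a * c * a)" using b' c' by (metis mult.assoc)
  also have "\<dots> = b * (b * a * a) * c" using c' by (metis mult.assoc)
  also have "\<dots> = b * a * c" using b' by metis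
  finally have left: "b = b * a * c" .
  have "c = a * c * c" using c' by metis
  also have "\<dots> = b * (a * a * c) * c" using b' by (metis mult.assoc)
  also have "\<dots> = b * a * c" using c' by (metis mult.assoc)
  finally show ?thesis using left by simp
qed

lemma group_inv_eqI: "is_group_inv a b \<Longrightarrow> group_inv a = b"
  unfolding group_inv_def by (rule the_equality) (auto intro: is_group_inv_unique)

lemma group_inv_power_cancel_left:
  assumes g: "is_group_inv a g" and "0 < k"
  shows "g ^ n * a ^ (n + k) = a ^ k"
proof -
  have "a * g * a = a" and "a * g = g * a"
    using g unfolding is_group_inv_def by auto
  then have "g * (a * a) = a" by (simp add: mult.assoc[symmetric])
  then have step: "g * a ^ Suc j = a ^ j" if "0 < j" for j
    using that by (cases j) (simp_all add: mult.assoc[symmetric])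
  show ?thesis
  proof (induction n)
    case (Suc n)
    have "g ^ Suc n * a ^ (Suc n + k) = g ^ n * (g * a ^ Suc (n + k))"
      by (simp only: power_Suc2 add_Suc mult.assoc)
    also have "\<dots> = a ^ k" using step[of "n + k"] \<open>0 < k\<close> Suc by simp
    finally show ?case .
  qed simp
qed

lemma group_inv_power_cancel_right:
  assumes g: "is_group_inv a g" and "0 < k"
  shows "a ^ (n + k) * g ^ n = a ^ k"
proof -
  have aga: "a * g * a = a" and comm: "a * g = g * a"
    using g unfolding is_group_inv_def by auto
  have "a * (a * g) = a * g * a" using comm by (metis mult.assoc)
  with aga have "a * (a * g) = a" by simp
  then have step: "a ^ Suc j * g = a ^ j" if "0 < j" for j
    using that by (cases j) (simp_all add: power_Suc2 mult.assoc del: power_Suc)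
  show ?thesis
  proof (induction n)
    case (Suc n)
    have "a ^ (Suc n + k) * g ^ Suc n = a ^ Suc (n + k) * g * g ^ n"
      by (simp only: power_Suc add_Suc mult.assoc)
    also have "\<dots> = a ^ k" using step[of "n + k"] \<open>0 < k\<close> Suc by simp
    finally show ?case .
  qed simp
qed

lemma mp_inv_mult_adjoint_group_inv:
  assumes s: "involution s" and g: "is_group_inv a g" and m: "is_mp_inv s a m"
  shows "m * a * s g = s g"
proof -
  note adjoint = involution_mult[OF s]
  have gag: "g * a * g = g" and comm: "a * g = g * a" using g by (auto simp: is_group_inv_def)
  have ama: "a * m * a = a" and ma: "s (m * a) = m * a" using m by (auto simp: is_mp_inv_def)
  have "s g = s (g * g * a)" using gag comm by (simp add: mult.assoc)
  then have G: "s g = s a * s g * s g" by (simp add: adjoint mult.assoc)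
  have "s a = s (a * (m * a))" using ama by (simp add: mult.assoc)
  then have "s a = m * a * s a" using ma by (simp add: adjoint)
  then show ?thesis using G by (metis mult.assoc)
qed

lemma power_Suc_sandwich:
  fixes p u q :: "'a::monoid_mult"
  assumes "q * p * u = u"
  shows "(p * u * q) ^ Suc n = p * u ^ Suc n * q"
proof (induction n)
  case (Suc n)
  have "(p * u * q) ^ Suc (Suc n) = p * u * q * (p * u ^ Suc n * q)"
    using Suc by (simp only: power_Suc)
  also have "\<dots> = p * u * (q * p * u) * u ^ n * q" by (simp add: mult.assoc)
  also have "\<dots> = p * u ^ Suc (Suc n) * q" using assms by (simp add: mult.assoc)
  finally show ?case .
qed simp

lemma mp_inv_eq_group_inv_if_square_identity:
  assumes s: "involution s" and g: "is_group_inv a g" and m: "is_mp_inv s a m"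
    and square: "a * s g ^ 2 * m = m * a ^ 3"
  shows "m = g"
proof -
  have ama: "a * m * a = a" and mam: "m * a * m = m" using m by (auto simp: is_mp_inv_def)
  have absorb: "a * m * a ^ n = a ^ n" if "0 < n" for n
    using that ama by (cases n) (simp_all add: mult.assoc[symmetric])
  have "m * a ^ 4 * m = m * a ^ 3 * a * m" using power_Suc2[of a 3] by (simp add: mult.assoc)
  also have "\<dots> = a * s g ^ 2 * (m * a * m)" by (metis square mult.assoc)
  also have "\<dots> = m * a ^ 3" using mam square by simp
  finally have "a * (m * a ^ 4 * m) = a * (m * a ^ 3)" by simp
  then have a4: "a ^ 4 * m = a ^ 3" by (simp add: mult.assoc[symmetric] absorb)
  have "a * m = g ^ 3 * (a ^ 4 * m)"
    using group_inv_power_cancel_left[OF g, where n = 3 and k = 1] by (simp add: mult.assoc[symmetric])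
  also have "\<dots> = g * (g ^ 2 * a ^ 3)" unfolding a4 by (simp add: power3_eq_cube power2_eq_square mult.assoc)
  also have "\<dots> = g * a" using group_inv_power_cancel_left[OF g, where n = 2 and k = 1] by simp
  finally have am: "a * m = g * a" .
  have "is_mp_inv s a g"
    using g m am unfolding is_group_inv_def is_mp_inv_def by metis
  then show ?thesis using is_mp_inv_unique[OF s m] by blast
qed

lemma adjoint_eq_group_inv_if_power_identities:
  assumes s: "involution s" and g: "is_group_inv a g" and hermitian: "s (a * g) = a * g"
    and square: "a * s g ^ 2 * g = g * a ^ 3" and cube: "a * s g ^ 3 * g = g * a ^ 4"
  shows "s a = g"
proof -
  define G where "G = s g"
  have comm: "a * g = g * a" and gag: "g * a * g = g" using g by (auto simp: is_group_inv_def)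
  note adjoint = involution_mult[OF s]
  have "G = s (g * (a * g))" using gag by (simp add: G_def mult.assoc)
  then have left: "a * g * G = G" using hermitian by (simp add: G_def adjoint)
  have "G = s (g * a * g)" using gag by (simp add: G_def)
  also have "\<dots> = G * s (g * a)" by (simp add: G_def adjoint)
  also have "s (g * a) = a * g" using hermitian comm by metis
  finally have right: "G * (a * g) = G" by simp
  have compress: "g * (a * G ^ k * g) * a = G ^ k" if "0 < k" for k
  proof -
    have "a * g * G ^ k = G ^ k"
      using that left by (cases k) (simp_all add: mult.assoc[symmetric])
    moreover have "G ^ k * (a * g) = G ^ k"
      using that right by (cases k) (simp_all add: power_Suc2 mult.assoc del: power_Suc)
    moreover have "g * (a * G ^ k * g) * a = a * g * G ^ k * (a * g)"
      by (simp add: comm mult.assoc)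
    ultimately show ?thesis by (simp add: mult.assoc)
  qed
  have G2: "G ^ 2 = a ^ 2"
  proof -
    have "G ^ 2 = g * (a * G ^ 2 * g) * a" using compress[of 2] by simp
    also have "\<dots> = g ^ 2 * (a ^ 3 * a)" using square by (simp add: G_def power2_eq_square mult.assoc)
    also have "\<dots> = g ^ 2 * a ^ (2 + 2)" using power_add[of a 3 1] by simp
    finally have "G ^ 2 = g ^ 2 * a ^ (2 + 2)" .
    then show ?thesis using group_inv_power_cancel_left[OF g, where n = 2 and k = 2] by simp
  qed
  have G3: "G ^ 3 = a ^ 3"
  proof -
    have "G ^ 3 = g * (a * G ^ 3 * g) * a" using compress[of 3] by simp
    also have "\<dots> = g ^ 2 * (a ^ 4 * a)" using cube by (simp add: G_def power2_eq_square mult.assoc)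
    also have "\<dots> = g ^ 2 * a ^ (2 + 3)" using power_add[of a 4 1] by simp
    finally have "G ^ 3 = g ^ 2 * a ^ (2 + 3)" .
    then show ?thesis using group_inv_power_cancel_left[OF g, where n = 2 and k = 3] by simp
  qed
  have "a ^ 2 * g ^ 2 = a * g"
    using group_inv_power_cancel_right[OF g, where n = 1 and k = 1]
    by (simp add: power2_eq_square mult.assoc[symmetric])
  then have "G = G * a ^ 2 * g ^ 2" using right by (simp add: mult.assoc)
  also have "G * a ^ 2 = G ^ 3" unfolding G2[symmetric] by (simp add: power3_eq_cube power2_eq_square mult.assoc)
  also have "G ^ 3 * g ^ 2 = a ^ (2 + 1) * g ^ 2" using G3 by simp
  also have "\<dots> = a" using group_inv_power_cancel_right[OF g, where n = 2 and k = 1] by simp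
  finally have "s g = a" unfolding G_def .
  then show ?thesis using involution_involutive[OF s] by metis
qed

lemma adjoint_eq_mp_inv_eq_group_inv_iff:
  assumes s: "involution s" and g: "is_group_inv a g" and m: "is_mp_inv s a m"
  shows "(s a = m \<and> m = g) \<longleftrightarrow>
    (a * s g ^ 2 * m = m * a ^ 3 \<and> a * s g ^ 3 * m = m * a ^ 4)"
proof
  assume "s a = m \<and> m = g"
  then have "s g = a" "m = g" using involution_involutive[OF s] by auto
  moreover have "a ^ n * g = g * a ^ n" for n
    using g by (simp add: is_group_inv_def power_commuting_commutes)
  ultimately show "a * s g ^ 2 * m = m * a ^ 3 \<and> a * s g ^ 3 * m = m * a ^ 4"
    by (simp add: power_Suc[symmetric])
next
  assume identities: "a * s g ^ 2 * m = m * a ^ 3 \<and> a * s g ^ 3 * m = m * a ^ 4"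
  then have "m = g" using mp_inv_eq_group_inv_if_square_identity[OF s g m] by blast
  moreover have "s (a * g) = a * g" using m \<open>m = g\<close> by (simp add: is_mp_inv_def)
  ultimately show "s a = m \<and> m = g"
    using adjoint_eq_group_inv_if_power_identities[OF s g] identities by simp
qed

theorem theorem4p1:
  fixes s :: "'a::ring_1 \<Rightarrow> 'a" and a :: 'a
  assumes "involution s"
    and "group_invertible a" and "mp_invertible s a"
  shows "is_SEP s a \<longleftrightarrow>
    (\<forall>k\<in>{2::nat, 3}. (a * s (group_inv a) * mp_inv s a) ^ k = (mp_inv s a * a ^ 2) ^ k)"
proof -
  obtain g m where g: "is_group_inv a g" and m: "is_mp_inv s a m"
    using assms(2,3) unfolding group_invertible_def mp_invertible_def by blast
  have inverses: "group_inv a = g" "mp_inv s a = m"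
    using group_inv_eqI[OF g] mp_inv_eqI[OF assms(1) m] .
  have lhs: "(a * s g * m) ^ Suc n = a * s g ^ Suc n * m" for n
    using power_Suc_sandwich mp_inv_mult_adjoint_group_inv[OF assms(1) g m] .
  have "(m * a * a) ^ Suc n = m * a ^ Suc n * a" for n
    using m by (intro power_Suc_sandwich) (simp add: is_mp_inv_def)
  then have rhs: "(m * a ^ 2) ^ Suc n = m * a ^ Suc (Suc n)" for n
    by (simp add: power2_eq_square power_Suc2 mult.assoc del: power_Suc)
  have "is_SEP s a \<longleftrightarrow> s a = m \<and> m = g"
    using assms inverses by (auto simp: is_SEP_def)
  also have "\<dots> \<longleftrightarrow> a * s g ^ 2 * m = m * a ^ 3 \<and> a * s g ^ 3 * m = m * a ^ 4"
    using adjoint_eq_mp_inv_eq_group_inv_iff[OF assms(1) g m] .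
  also have "\<dots> \<longleftrightarrow> (\<forall>k\<in>{2::nat, 3}. (a * s g * m) ^ k = (m * a ^ 2) ^ k)"
    using lhs[of 1] lhs[of 2] rhs[of 1] rhs[of 2] by (simp add: numeral_eq_Suc del: power_Suc)
  finally show ?thesis unfolding inverses .
qed

end
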